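(* Per-strategy scaling of payoffs does not in general map coarse correlated equilibria to reciprocally scaled coarse correlated equilibria. Precisely: there exist a finite two-player normal-form game $(G_1,G_2)$ with strategy sets $\mathcal{A}_1,\mathcal{A}_2$, positive functions $s_1:\mathcal{A}_1\to\mathbb{R}_{>0}$, $s_2:\mathcal{A}_2\to\mathbb{R}_{>0}$, and a coarse correlated equilibrium $\sigma$ of $(G_1,G_2)$ such that, with $\hat G_1(a_1,a_2)=s_2(a_2)G_1(a_1,a_2)$, $\hat G_2(a_1,a_2)=s_1(a_1)G_2(a_1,a_2)$ and $\hat\sigma(a_1,a_2)=\frac{\sigma(a_1,a_2)}{Z\,s_1(a_1)s_2(a_2)}$ where $Z=\sum_{a}\frac{\sigma(a)}{s_1(a_1)s_2(a_2)}$, the distribution $\hat\sigma$ is not a coarse correlated equilibrium of $(\hat G_1,\hat G_2)$.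
   Context: A joint distribution $\sigma$ on $\mathcal{A}_1\times\mathcal{A}_2$ is a coarse correlated equilibrium (CCE) of $(G_1,G_2)$ if for each player $p\in\{1,2\}$ and each $a'_p\in\mathcal{A}_p$: $\sum_{a}\sigma(a)\big(G_p(a'_p,a_{-p})-G_p(a)\big)\le 0$, where $a_{-p}$ is the other player's strategy. *)

theory Defs
  imports Complex_Main
begin

definition is_distribution :: "'a set \<Rightarrow> 'b set \<Rightarrow> ('a \<times> 'b \<Rightarrow> real) \<Rightarrow> bool" where
  "is_distribution A1 A2 \<sigma> \<longleftrightarrow>
     (\<forall>a\<in>A1 \<times> A2. \<sigma> a \<ge> 0) \<and> (\<Sum>a\<in>A1 \<times> A2. \<sigma> a) = 1"

definition is_CCE :: "'a set \<Rightarrow> 'b set \<Rightarrow> ('a \<times> 'b \<Rightarrow> real) \<Rightarrow> ('a \<times> 'b \<Rightarrow> real)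
     \<Rightarrow> ('a \<times> 'b \<Rightarrow> real) \<Rightarrow> bool" where
  "is_CCE A1 A2 G1 G2 \<sigma> \<longleftrightarrow>
     is_distribution A1 A2 \<sigma> \<and>
     (\<forall>b1\<in>A1. (\<Sum>a\<in>A1 \<times> A2. \<sigma> a * (G1 (b1, snd a) - G1 a)) \<le> 0) \<and>
     (\<forall>b2\<in>A2. (\<Sum>a\<in>A1 \<times> A2. \<sigma> a * (G2 (fst a, b2) - G2 a)) \<le> 0)"

end

theory Submission
  imports Defs
begin

text \<open>Take a game in which only player 1 has a nonzero payoff and rescale only player 1's
  strategies, so that the payoffs stay unchanged and only the distribution is reweighted.
  Player 1 has a safe strategy 2 worth 1 against everything, while strategy 1 is worth 2
  against player 2's strategy 1 and strategy 0 is worth nothing. The distribution putting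
  weight 1/2 on each of (0,0) and (1,1) gives player 1 exactly 1, so it is a coarse correlated
  equilibrium. Halving the scale of strategy 0 doubles the relative weight of (0,0): the
  reweighted distribution is (2/3, 1/3), player 1 now gets only 2/3, and deviating to the
  safe strategy gains 1/3.\<close>

definition example_G1 :: "nat \<times> nat \<Rightarrow> real" where
  "example_G1 a = (if fst a = 2 then 1 else if a = (1, 1) then 2 else 0)"

definition example_s1 :: "nat \<Rightarrow> real" where
  "example_s1 a1 = (if a1 = 0 then 1/2 else 1)"

definition example_\<sigma> :: "nat \<times> nat \<Rightarrow> real" where
  "example_\<sigma> a = (if a = (0, 0) \<or> a = (1, 1) then 1/2 else 0)"

definition example_\<sigma>' :: "nat \<times> nat \<Rightarrow> real" where
  "example_\<sigma>' a = (if a = (0, 0) then 2/3 else if a = (1, 1) then 1/3 else 0)"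

lemma example_profiles: "{0, 1, 2::nat} \<times> {0, 1::nat} = {(0,0), (0,1), (1,0), (1,1), (2,0), (2,1)}"
  by auto

lemma example_\<sigma>_is_CCE: "is_CCE {0, 1, 2} {0, 1} example_G1 (\<lambda>_. 0) example_\<sigma>"
  unfolding is_CCE_def is_distribution_def example_profiles
  by (auto simp: example_G1_def example_\<sigma>_def)

lemma example_normaliser:
  "(\<Sum>a\<in>{0, 1, 2} \<times> {0, 1}. example_\<sigma> a / (example_s1 (fst a) * 1)) = 3/2"
  unfolding example_profiles by (simp add: example_\<sigma>_def example_s1_def)

lemma example_rescaled_\<sigma>:
  "(\<lambda>a. example_\<sigma> a / (3/2 * example_s1 (fst a) * 1)) = example_\<sigma>'"
  by (auto simp: example_\<sigma>_def example_s1_def example_\<sigma>'_def)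

lemma example_\<sigma>'_not_CCE: "\<not> is_CCE {0, 1, 2} {0, 1} example_G1 (\<lambda>_. 0) example_\<sigma>'"
proof -
  have "(\<Sum>a\<in>{0, 1, 2} \<times> {0, 1}. example_\<sigma>' a * (example_G1 (2, snd a) - example_G1 a)) = 1/3"
    unfolding example_profiles by (simp add: example_\<sigma>'_def example_G1_def)
  then show ?thesis
    unfolding is_CCE_def by force
qed

theorem mainTheorem2:
  shows "\<exists>(A1::nat set) (A2::nat set) (G1::nat \<times> nat \<Rightarrow> real) (G2::nat \<times> nat \<Rightarrow> real)
            (s1::nat \<Rightarrow> real) (s2::nat \<Rightarrow> real) (\<sigma>::nat \<times> nat \<Rightarrow> real).
     finite A1 \<and> finite A2 \<and> A1 \<noteq> {} \<and> A2 \<noteq> {} \<and>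
     (\<forall>a1\<in>A1. s1 a1 > 0) \<and> (\<forall>a2\<in>A2. s2 a2 > 0) \<and>
     is_CCE A1 A2 G1 G2 \<sigma> \<and>
     (let Z = (\<Sum>a\<in>A1 \<times> A2. \<sigma> a / (s1 (fst a) * s2 (snd a)));
          G1' = (\<lambda>a. s2 (snd a) * G1 a);
          G2' = (\<lambda>a. s1 (fst a) * G2 a);
          \<sigma>' = (\<lambda>a. \<sigma> a / (Z * s1 (fst a) * s2 (snd a)))
      in \<not> is_CCE A1 A2 G1' G2' \<sigma>')"
proof (intro exI conjI)
  show "is_CCE {0, 1, 2} {0, 1} example_G1 (\<lambda>_. 0) example_\<sigma>"
    by (rule example_\<sigma>_is_CCE)
  show "let Z = (\<Sum>a\<in>{0, 1, 2} \<times> {0, 1}. example_\<sigma> a / (example_s1 (fst a) * (\<lambda>_. 1) (snd a)));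
          G1' = (\<lambda>a. (\<lambda>_. 1) (snd a) * example_G1 a);
          G2' = (\<lambda>a. example_s1 (fst a) * (\<lambda>_. 0) a);
          \<sigma>' = (\<lambda>a. example_\<sigma> a / (Z * example_s1 (fst a) * (\<lambda>_. 1) (snd a)))
      in \<not> is_CCE {0, 1, 2} {0, 1} G1' G2' \<sigma>'"
    using example_\<sigma>'_not_CCE by (simp only: Let_def example_normaliser example_rescaled_\<sigma>) simp
qed (auto simp: example_s1_def)

end
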